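(* Let $\mathcal{L}$ be a compendious logic. Every non-finitary theory $K$ of $\mathcal{L}$ contains a cleaving, i.e., there is a cleaving $\mathcal{C}\subseteq K$.
   Context: A logic $(\mathrm{Fm},\mathrm{Cn})$ (countable $\mathrm{Fm}$) is compendious if it is Tarskian ($\mathrm{Cn}$ monotone, extensive, idempotent), Boolean (has $\neg,\lor$ with $\mathrm{Cn}(\{\varphi\})\cap\mathrm{Cn}(\{\neg\varphi\})=\mathrm{Cn}(\emptyset)$, $\mathrm{Cn}(\{\varphi,\neg\varphi\})=\mathrm{Fm}$, and the usual introduction and elimination rules for $\lor$ relative to $\mathrm{Cn}$), has infinitely many theories ($K=\mathrm{Cn}(K)$), and satisfies (Discerning): for all sets $X,Y$ of complete consistent theories, $\bigcap X=\bigcap Y$ implies $X=Y$. $\varphi\equiv\psi$ iff $\mathrm{Cn}(\{\varphi\})=\mathrm{Cn}(\{\psi\})$. A theory is non-finitary if it contains infinitely many $\equiv$-classes. A cleaving is an infinite set of formulae $\mathcal{C}$ such that for all distinct $\varphi,\psi\in\mathcal{C}$: (CL1) $\varphi\not\equiv\psi$, and (CL2) $\varphi\lor\psi\in\mathrm{Cn}(\emptyset)$. *)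

theory Defs
  imports Main "HOL-Library.Countable_Set"
begin

definition tarskian :: "('f set \<Rightarrow> 'f set) \<Rightarrow> bool" where
  "tarskian Cn \<longleftrightarrow>
     (\<forall>X Y. X \<subseteq> Y \<longrightarrow> Cn X \<subseteq> Cn Y) \<and>
     (\<forall>X. X \<subseteq> Cn X) \<and>
     (\<forall>X. Cn (Cn X) = Cn X)"

definition boolean_logic ::
  "('f set \<Rightarrow> 'f set) \<Rightarrow> ('f \<Rightarrow> 'f) \<Rightarrow> ('f \<Rightarrow> 'f \<Rightarrow> 'f) \<Rightarrow> bool" where
  "boolean_logic Cn ng dsj \<longleftrightarrow>
     (\<forall>\<phi>. Cn {\<phi>} \<inter> Cn {ng \<phi>} = Cn {}) \<and>
     (\<forall>\<phi>. Cn {\<phi>, ng \<phi>} = UNIV) \<and>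
     (\<forall>X \<phi> \<psi>. \<phi> \<in> Cn X \<longrightarrow> dsj \<phi> \<psi> \<in> Cn X) \<and>
     (\<forall>X \<phi> \<psi>. \<psi> \<in> Cn X \<longrightarrow> dsj \<phi> \<psi> \<in> Cn X) \<and>
     (\<forall>X \<phi> \<psi> \<chi>. \<chi> \<in> Cn (X \<union> {\<phi>}) \<longrightarrow> \<chi> \<in> Cn (X \<union> {\<psi>})
          \<longrightarrow> \<chi> \<in> Cn (X \<union> {dsj \<phi> \<psi>}))"

definition is_theory :: "('f set \<Rightarrow> 'f set) \<Rightarrow> 'f set \<Rightarrow> bool" where
  "is_theory Cn K \<longleftrightarrow> Cn K = K"

definition complete_consistent_theory ::
  "('f set \<Rightarrow> 'f set) \<Rightarrow> ('f \<Rightarrow> 'f) \<Rightarrow> 'f set \<Rightarrow> bool" where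
  "complete_consistent_theory Cn ng K \<longleftrightarrow>
     is_theory Cn K \<and> K \<noteq> UNIV \<and> (\<forall>\<phi>. \<phi> \<in> K \<or> ng \<phi> \<in> K)"

definition discerning :: "('f set \<Rightarrow> 'f set) \<Rightarrow> ('f \<Rightarrow> 'f) \<Rightarrow> bool" where
  "discerning Cn ng \<longleftrightarrow>
     (\<forall>X Y. X \<subseteq> {K. complete_consistent_theory Cn ng K} \<longrightarrow>
            Y \<subseteq> {K. complete_consistent_theory Cn ng K} \<longrightarrow>
            \<Inter>X = \<Inter>Y \<longrightarrow> X = Y)"

definition compendious ::
  "('f set \<Rightarrow> 'f set) \<Rightarrow> ('f \<Rightarrow> 'f) \<Rightarrow> ('f \<Rightarrow> 'f \<Rightarrow> 'f) \<Rightarrow> bool" where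
  "compendious Cn ng dsj \<longleftrightarrow>
     countable (UNIV :: 'f set) \<and>
     tarskian Cn \<and>
     boolean_logic Cn ng dsj \<and>
     infinite {K. is_theory Cn K} \<and>
     discerning Cn ng"

definition log_equiv :: "('f set \<Rightarrow> 'f set) \<Rightarrow> 'f \<Rightarrow> 'f \<Rightarrow> bool" where
  "log_equiv Cn \<phi> \<psi> \<longleftrightarrow> Cn {\<phi>} = Cn {\<psi>}"

definition non_finitary :: "('f set \<Rightarrow> 'f set) \<Rightarrow> 'f set \<Rightarrow> bool" where
  "non_finitary Cn K \<longleftrightarrow>
     infinite ((\<lambda>\<phi>. {\<psi>. log_equiv Cn \<psi> \<phi>}) ` K)"

definition cleaving ::
  "('f set \<Rightarrow> 'f set) \<Rightarrow> ('f \<Rightarrow> 'f \<Rightarrow> 'f) \<Rightarrow> 'f set \<Rightarrow> bool" where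
  "cleaving Cn dsj C \<longleftrightarrow>
     infinite C \<and>
     (\<forall>\<phi>\<in>C. \<forall>\<psi>\<in>C. \<phi> \<noteq> \<psi> \<longrightarrow>
        \<not> log_equiv Cn \<phi> \<psi> \<and> dsj \<phi> \<psi> \<in> Cn {})"

end

theory Submission
  imports Defs
begin

text \<open>Call a formula r rich if infinitely many equivalence classes of K lie below r
  (i.e. are entailed by r); the falsum is rich since K is non-finitary. If r is rich,
  then for every y one of r \<or> y and r \<or> \<not>y is rich, because z below r is determined
  up to equivalence by the classes of z \<or> y and z \<or> \<not>y. Using this twice one finds
  a non-tautological x \<in> K below r such that r \<or> \<not>x is still rich. Iterating
  r \<mapsto> r \<or> \<not>x yields a sequence x_0, x_1, ... in K in which \<not>x_n entails x_m for
  n < m, so every x_n \<or> x_m is a tautology; no two x_n are equivalent since none is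
  a tautology.\<close>

lemma finite_image_factor:
  assumes "finite (f ` S)" and "\<And>z z'. z \<in> S \<Longrightarrow> z' \<in> S \<Longrightarrow> f z = f z' \<Longrightarrow> g z = g z'"
  shows "finite (g ` S)"
proof -
  have "g ` S \<subseteq> (\<lambda>p. g (SOME z. z \<in> S \<and> f z = p)) ` f ` S"
  proof
    fix w assume "w \<in> g ` S"
    then obtain z where z: "z \<in> S" "w = g z" by blast
    let ?z' = "SOME z'. z' \<in> S \<and> f z' = f z"
    have "?z' \<in> S \<and> f ?z' = f z" by (rule someI[of _ z]) (simp add: z(1))
    then have "w = g ?z'" using assms(2) z by metis
    then show "w \<in> (\<lambda>p. g (SOME z. z \<in> S \<and> f z = p)) ` f ` S" using z(1) by blast
  qed
  then show ?thesis using assms(1) finite_subset by blast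
qed

locale tarskian_boolean =
  fixes Cn :: "'f set \<Rightarrow> 'f set" and ng :: "'f \<Rightarrow> 'f" and dsj :: "'f \<Rightarrow> 'f \<Rightarrow> 'f"
  assumes tarskian: "tarskian Cn" and boolean: "boolean_logic Cn ng dsj"
begin

lemma Cn_mono: "X \<subseteq> Y \<Longrightarrow> Cn X \<subseteq> Cn Y"
  using tarskian unfolding tarskian_def by blast

lemma Cn_ext: "X \<subseteq> Cn X"
  using tarskian unfolding tarskian_def by blast

lemma Cn_least: "X \<subseteq> Cn Y \<Longrightarrow> Cn X \<subseteq> Cn Y"
  using tarskian Cn_mono unfolding tarskian_def by blast

lemma in_Cn: "a \<in> X \<Longrightarrow> a \<in> Cn X"
  using Cn_ext by blast

lemma Cn_insert: "a \<in> Cn X \<Longrightarrow> a \<in> Cn (insert b X)"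
  using Cn_mono[of X "insert b X"] by blast

lemma Cn_empty_in: "t \<in> Cn {} \<Longrightarrow> t \<in> Cn X"
  using Cn_mono[of "{}" X] by blast

lemma entails_trans: "b \<in> Cn {a} \<Longrightarrow> c \<in> Cn {b} \<Longrightarrow> c \<in> Cn {a}"
  using Cn_least[of "{b}" "{a}"] by blast

lemma Cn_singleton_eq: "a \<in> Cn {b} \<Longrightarrow> b \<in> Cn {a} \<Longrightarrow> Cn {a} = Cn {b}"
  using Cn_least[of "{a}" "{b}"] Cn_least[of "{b}" "{a}"] by blast

lemma Cn_singleton_taut: "z \<in> Cn {} \<Longrightarrow> Cn {z} = Cn {}"
  using Cn_least[of "{z}" "{}"] Cn_mono[of "{}" "{z}"] by blast

lemma Cn_cut: "t \<in> Cn X \<Longrightarrow> \<chi> \<in> Cn (insert t X) \<Longrightarrow> \<chi> \<in> Cn X"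
  using Cn_least[of "insert t X" X] Cn_ext by blast

lemma explosion: "\<phi> \<in> Cn X \<Longrightarrow> ng \<phi> \<in> Cn X \<Longrightarrow> \<chi> \<in> Cn X"
  using Cn_least[of "{\<phi>, ng \<phi>}" X] boolean unfolding boolean_logic_def by blast

lemma disjI1: "\<phi> \<in> Cn X \<Longrightarrow> dsj \<phi> \<psi> \<in> Cn X"
  using boolean unfolding boolean_logic_def by blast

lemma disjI2: "\<psi> \<in> Cn X \<Longrightarrow> dsj \<phi> \<psi> \<in> Cn X"
  using boolean unfolding boolean_logic_def by blast

lemma disjE: "\<chi> \<in> Cn (insert \<phi> X) \<Longrightarrow> \<chi> \<in> Cn (insert \<psi> X) \<Longrightarrow> \<chi> \<in> Cn (insert (dsj \<phi> \<psi>) X)"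
  using boolean unfolding boolean_logic_def by simp

lemma disjE_singleton: "\<chi> \<in> Cn {\<phi>} \<Longrightarrow> \<chi> \<in> Cn {\<psi>} \<Longrightarrow> \<chi> \<in> Cn {dsj \<phi> \<psi>}"
  using disjE[of \<chi> \<phi> "{}" \<psi>] by simp

lemma disj_mono_left: "\<phi> \<in> Cn {\<phi>'} \<Longrightarrow> dsj \<phi> \<psi> \<in> Cn {dsj \<phi>' \<psi>}"
  by (rule disjE_singleton[OF disjI1 disjI2[OF in_Cn]]) auto

lemma excluded_middle: "dsj \<phi> (ng \<phi>) \<in> Cn {}"
proof -
  have "dsj \<phi> (ng \<phi>) \<in> Cn {\<phi>} \<inter> Cn {ng \<phi>}"
    by (blast intro: disjI1 disjI2 in_Cn)
  then show ?thesis using boolean unfolding boolean_logic_def by blast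
qed

lemma case_split: "\<chi> \<in> Cn (insert \<phi> X) \<Longrightarrow> \<chi> \<in> Cn (insert (ng \<phi>) X) \<Longrightarrow> \<chi> \<in> Cn X"
  using disjE Cn_cut Cn_empty_in excluded_middle by blast

lemma disj_syllogism: "dsj a b \<in> Cn X \<Longrightarrow> ng b \<in> Cn X \<Longrightarrow> a \<in> Cn X"
  by (erule Cn_cut, rule disjE) (auto intro: in_Cn Cn_insert explosion[of b])

lemma disj_neg_syllogism: "dsj a (ng b) \<in> Cn X \<Longrightarrow> b \<in> Cn X \<Longrightarrow> a \<in> Cn X"
  by (erule Cn_cut, rule disjE) (auto intro: in_Cn Cn_insert explosion[of b])

lemma falsum_entails_all: "Cn {ng (dsj a (ng a))} = UNIV"
  using explosion[of "dsj a (ng a)" "{ng (dsj a (ng a))}"] Cn_empty_in[OF excluded_middle] in_Cn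
  by blast

lemma neg_disj_neg_entails: "\<psi> \<in> Cn {ng (dsj \<phi> (ng \<psi>))}"
  by (rule case_split[of _ \<psi>]) (auto intro: in_Cn explosion[of "dsj \<phi> (ng \<psi>)"] disjI2)

lemma disj_classes_determine:
  assumes "Cn {dsj z y} = Cn {dsj z' y}" and "Cn {dsj z (ng y)} = Cn {dsj z' (ng y)}"
  shows "z \<in> Cn {z'}"
proof (rule case_split[of z y])
  have "dsj z (ng y) \<in> Cn {z'}"
    using assms(2) entails_trans[OF disjI1[OF in_Cn]] in_Cn by blast
  then show "z \<in> Cn (insert y {z'})"
    by (auto intro: disj_neg_syllogism Cn_insert in_Cn)
  have "dsj z y \<in> Cn {z'}"
    using assms(1) entails_trans[OF disjI1[OF in_Cn]] in_Cn by blast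
  then show "z \<in> Cn (insert (ng y) {z'})"
    by (auto intro: disj_syllogism Cn_insert in_Cn)
qed

lemma disj_taut_if_neg_entails:
  "\<psi> \<in> Cn {ng \<phi>} \<Longrightarrow> dsj \<phi> \<psi> \<in> Cn {} \<and> dsj \<psi> \<phi> \<in> Cn {}"
  using case_split[of "dsj \<phi> \<psi>" \<phi> "{}"] case_split[of "dsj \<psi> \<phi>" \<phi> "{}"]
  by (simp add: disjI1 disjI2 in_Cn)

lemma not_equiv_if_disj_taut:
  assumes "\<phi> \<notin> Cn {}" and "dsj \<phi> \<psi> \<in> Cn {}"
  shows "\<not> log_equiv Cn \<phi> \<psi>"
proof
  assume "log_equiv Cn \<phi> \<psi>"
  then have "\<phi> \<in> Cn {dsj \<phi> \<psi>}"
    unfolding log_equiv_def by (metis disjE_singleton in_Cn singletonI)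
  then show False using assms Cn_singleton_taut by blast
qed

lemma cleaving_range:
  fixes xs :: "nat \<Rightarrow> 'f"
  assumes nontaut: "\<And>n. xs n \<notin> Cn {}"
    and later: "\<And>n m. n < m \<Longrightarrow> xs m \<in> Cn {ng (xs n)}"
  shows "cleaving Cn dsj (range xs)"
proof -
  have ordered: "\<not> log_equiv Cn (xs n) (xs m) \<and> dsj (xs n) (xs m) \<in> Cn {} \<and> dsj (xs m) (xs n) \<in> Cn {}"
    if "n < m" for n m
    using disj_taut_if_neg_entails[OF later[OF that]] not_equiv_if_disj_taut nontaut by blast
  have pair: "\<not> log_equiv Cn (xs n) (xs m) \<and> dsj (xs n) (xs m) \<in> Cn {}" if "n \<noteq> m" for n m
    using ordered[of n m] ordered[of m n] unfolding log_equiv_def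
    by (cases n m rule: linorder_cases) (use that in auto)
  have "inj xs"
  proof (rule injI, rule ccontr)
    fix n m assume "xs n = xs m" "n \<noteq> m"
    then show False using pair[of n m] by (simp add: log_equiv_def)
  qed
  moreover have "\<not> log_equiv Cn \<phi> \<psi> \<and> dsj \<phi> \<psi> \<in> Cn {}"
    if "\<phi> \<in> range xs" "\<psi> \<in> range xs" and distinct: "\<phi> \<noteq> \<psi>" for \<phi> \<psi>
  proof -
    from that obtain n m where "\<phi> = xs n" "\<psi> = xs m" by blast
    then show ?thesis using pair[of n m] distinct by fastforce
  qed
  ultimately show ?thesis
    unfolding cleaving_def using range_inj_infinite by blast
qed

end

locale theory_of_boolean_logic = tarskian_boolean +
  fixes K :: "'f set"
  assumes theory_K: "Cn K = K"
begin

lemma in_K_if_entailed: "a \<in> K \<Longrightarrow> b \<in> Cn {a} \<Longrightarrow> b \<in> K"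
  using Cn_mono[of "{a}" K] theory_K by blast

definition lower :: "'f \<Rightarrow> 'f set" where
  "lower r = {z \<in> K. z \<in> Cn {r}}"

definition rich :: "'f \<Rightarrow> bool" where
  "rich r \<longleftrightarrow> infinite ((\<lambda>z. Cn {z}) ` lower r)"

lemma rich_mono: "a \<in> Cn {b} \<Longrightarrow> rich a \<Longrightarrow> rich b"
proof -
  assume "a \<in> Cn {b}" "rich a"
  then have "lower a \<subseteq> lower b" unfolding lower_def using entails_trans by blast
  then show "rich b" using \<open>rich a\<close> unfolding rich_def by (meson finite_subset image_mono)
qed

lemma rich_avoids_finite: "rich r \<Longrightarrow> finite F \<Longrightarrow> \<exists>z\<in>lower r. Cn {z} \<notin> F"
  unfolding rich_def by (meson finite_subset image_subsetI)

lemma rich_disj_cases: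
  assumes "rich r"
  shows "rich (dsj r y) \<or> rich (dsj r (ng y))"
proof (rule ccontr)
  let ?f = "\<lambda>z. (Cn {dsj z y}, Cn {dsj z (ng y)})"
  assume "\<not> ?thesis"
  then have "finite (((\<lambda>z. Cn {z}) ` lower (dsj r y)) \<times> ((\<lambda>z. Cn {z}) ` lower (dsj r (ng y))))"
    unfolding rich_def by blast
  moreover have "?f ` lower r \<subseteq> ((\<lambda>z. Cn {z}) ` lower (dsj r y)) \<times> ((\<lambda>z. Cn {z}) ` lower (dsj r (ng y)))"
  proof (rule image_subsetI)
    fix z assume "z \<in> lower r"
    then have z: "z \<in> K" "z \<in> Cn {r}" unfolding lower_def by auto
    have "dsj z \<psi> \<in> lower (dsj r \<psi>)" for \<psi>
      using in_K_if_entailed[OF z(1) disjI1[OF in_Cn[OF singletonI]]] disj_mono_left[OF z(2)]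
      unfolding lower_def by blast
    then show "?f z \<in> ((\<lambda>z. Cn {z}) ` lower (dsj r y)) \<times> ((\<lambda>z. Cn {z}) ` lower (dsj r (ng y)))"
      by (intro SigmaI image_eqI[OF refl])
  qed
  ultimately have "finite (?f ` lower r)" using finite_subset by blast
  then have "finite ((\<lambda>z. Cn {z}) ` lower r)"
  proof (rule finite_image_factor)
    fix z z' assume "?f z = ?f z'"
    then have "Cn {dsj z y} = Cn {dsj z' y}" "Cn {dsj z (ng y)} = Cn {dsj z' (ng y)}" by simp_all
    then show "Cn {z} = Cn {z'}"
      using Cn_singleton_eq disj_classes_determine by metis
  qed
  then show False using assms unfolding rich_def by blast
qed

lemma rich_extend_below:
  assumes "rich y" and "y \<in> lower r"
  shows "\<exists>x. x \<in> lower r \<and> x \<notin> Cn {} \<and> rich (dsj r (ng x))"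
proof -
  obtain y' where y': "y' \<in> lower y" "Cn {y'} \<noteq> Cn {}" "Cn {y'} \<noteq> Cn {y}"
    using rich_avoids_finite[OF assms(1), of "{Cn {}, Cn {y}}"] by auto
  have y'_lower: "y' \<in> lower r" and y'_nontaut: "y' \<notin> Cn {}"
    using y' assms(2) entails_trans Cn_singleton_taut unfolding lower_def by auto
  show ?thesis
  proof (cases "rich (dsj y (ng y'))")
    case True
    then have "rich (dsj r (ng y'))"
      using assms(2) rich_mono disj_mono_left unfolding lower_def by blast
    then show ?thesis using y'_lower y'_nontaut by blast
  next
    case False
    let ?x = "dsj y (ng y')"
    have "rich (dsj y y')" using False rich_disj_cases[OF assms(1)] by blast
    moreover have "dsj y y' \<in> Cn {dsj r (ng ?x)}"
      using assms(2) disjE_singleton[OF disjI1 disjI2[OF neg_disj_neg_entails]]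
      unfolding lower_def by blast
    ultimately have "rich (dsj r (ng ?x))" using rich_mono by blast
    moreover have "?x \<in> lower r"
      using assms(2) unfolding lower_def by (auto intro: in_K_if_entailed disjI1 in_Cn)
    moreover have "?x \<notin> Cn {}"
    proof
      assume "?x \<in> Cn {}"
      then have "y \<in> Cn {y'}" using disj_neg_syllogism Cn_empty_in in_Cn by blast
      then show False using y' Cn_singleton_eq unfolding lower_def by blast
    qed
    ultimately show ?thesis by blast
  qed
qed

lemma rich_extend:
  assumes "rich r"
  shows "\<exists>x. x \<in> lower r \<and> x \<notin> Cn {} \<and> rich (dsj r (ng x))"
proof -
  obtain y where y: "y \<in> lower r" "Cn {y} \<noteq> Cn {}"
    using rich_avoids_finite[OF assms, of "{Cn {}}"] by auto
  show ?thesis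
  proof (cases "rich (dsj r (ng y))")
    case True
    then show ?thesis using y Cn_singleton_taut by blast
  next
    case False
    then have "rich y"
      using rich_disj_cases[OF assms, of y] rich_mono disjI2 in_Cn by blast
    then show ?thesis using rich_extend_below y(1) by blast
  qed
qed

lemma rich_imp_cleaving:
  assumes "rich r\<^sub>0"
  shows "\<exists>C. cleaving Cn dsj C \<and> C \<subseteq> K"
proof -
  define next_cut where
    "next_cut r = (SOME x. x \<in> lower r \<and> x \<notin> Cn {} \<and> rich (dsj r (ng x)))" for r
  have next_cut: "next_cut r \<in> lower r \<and> next_cut r \<notin> Cn {} \<and> rich (dsj r (ng (next_cut r)))"
    if "rich r" for r
    unfolding next_cut_def using someI_ex[OF rich_extend[OF that]] .
  define rs where "rs = rec_nat r\<^sub>0 (\<lambda>_ r. dsj r (ng (next_cut r)))"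
  define xs where "xs n = next_cut (rs n)" for n
  have rs_Suc: "rs (Suc n) = dsj (rs n) (ng (xs n))" for n
    unfolding rs_def xs_def by simp
  have rich_rs: "rich (rs n)" for n
  proof (induction n)
    case 0
    then show ?case using assms by (simp add: rs_def)
  next
    case (Suc n)
    then show ?case using next_cut by (simp add: rs_Suc xs_def)
  qed
  have cut: "xs n \<in> lower (rs n) \<and> xs n \<notin> Cn {}" for n
    using next_cut[OF rich_rs] unfolding xs_def by blast
  have rs_chain: "rs (Suc (n + k)) \<in> Cn {rs (Suc n)}" for n k
  proof (induction k)
    case (Suc k)
    have "rs (Suc (n + Suc k)) \<in> Cn {rs (Suc (n + k))}" by (simp add: rs_Suc disjI1 in_Cn)
    then show ?case using entails_trans[OF Suc.IH] by simp
  qed (simp add: in_Cn)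
  have later: "xs m \<in> Cn {ng (xs n)}" if less: "n < m" for n m
  proof -
    obtain k where m: "m = Suc (n + k)" using less_imp_Suc_add[OF less] by blast
    have "xs m \<in> Cn {rs (Suc (n + k))}" using cut[of m] unfolding lower_def m by blast
    then have "xs m \<in> Cn {rs (Suc n)}" by (rule entails_trans[OF rs_chain])
    moreover have "rs (Suc n) \<in> Cn {ng (xs n)}" by (simp add: rs_Suc disjI2 in_Cn)
    ultimately show ?thesis using entails_trans by blast
  qed
  have "cleaving Cn dsj (range xs)"
    by (rule cleaving_range) (use cut later in auto)
  moreover have "range xs \<subseteq> K" using cut unfolding lower_def by blast
  ultimately show ?thesis by blast
qed

lemma non_finitary_imp_rich_falsum:
  assumes "non_finitary Cn K"
  shows "rich (ng (dsj a (ng a)))"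
proof -
  have "(\<lambda>\<phi>. {\<psi>. log_equiv Cn \<psi> \<phi>}) ` K = (\<lambda>A. {\<psi>. Cn {\<psi>} = A}) ` (\<lambda>\<phi>. Cn {\<phi>}) ` K"
    unfolding log_equiv_def by (simp add: image_image)
  then have "infinite ((\<lambda>\<phi>. Cn {\<phi>}) ` K)"
    using assms unfolding non_finitary_def by auto
  then show ?thesis unfolding rich_def lower_def falsum_entails_all by simp
qed

end

theorem mainTheorem6:
  fixes Cn :: "'f set \<Rightarrow> 'f set" and ng :: "'f \<Rightarrow> 'f"
    and dsj :: "'f \<Rightarrow> 'f \<Rightarrow> 'f" and K :: "'f set"
  assumes "compendious Cn ng dsj"
    and "is_theory Cn K"
    and "non_finitary Cn K"
  shows "\<exists>C. cleaving Cn dsj C \<and> C \<subseteq> K"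
proof -
  interpret theory_of_boolean_logic Cn ng dsj K
    using assms(1,2) unfolding compendious_def is_theory_def by unfold_locales auto
  show ?thesis
    using rich_imp_cleaving[OF non_finitary_imp_rich_falsum[OF assms(3)]] .
qed

end
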